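(* Let $[\cdot]_{\mathbb{C}}:\mathbb{H}^d\to\mathbb{C}^{2d}$, $z+wj\mapsto\begin{pmatrix}z\\ \bar w\end{pmatrix}$, and let $v_1,\dots,v_n\in\mathbb{H}^d$. (1) If $([v_1]_{\mathbb{C}},\dots,[v_n]_{\mathbb{C}})$ is a tight frame for $\mathbb{C}^{2d}$, then $(v_1,\dots,v_n)$ is a tight frame for $\mathbb{H}^d$. (2) If $(v_1,\dots,v_n)$ is a tight frame for $\mathbb{H}^d$, then $([v_j]_{\mathbb{C}})_{j=1}^n$ is a tight frame for $\mathbb{C}^{2d}$ if and only if $$\sum_j\sum_k|\operatorname{Co}_1(\langle v_j,v_k\rangle)|^2=\sum_j\sum_k|\operatorname{Co}_2(\langle v_j,v_k\rangle)|^2.$$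
   Context: Every quaternion (and entrywise every quaternionic vector) is written uniquely as $z+wj$ with $z,w$ complex. For $q=z+wj\in\mathbb{H}$, $\operatorname{Co}_1(q)=z$ and $\operatorname{Co}_2(q)=\bar w$, so $|q|^2=|\operatorname{Co}_1(q)|^2+|\operatorname{Co}_2(q)|^2$. $\mathbb{H}^d$ is a right vector space; inner products are Euclidean, $\langle v,w\rangle=\sum_j\overline{w_j}v_j$. A sequence $(u_j)$ is a tight frame for $\mathbb{F}^D$ if there is $A>0$ with $A\|u\|^2=\sum_j|\langle u,u_j\rangle|^2$ for all $u\in\mathbb{F}^D$. *)

theory Defs
  imports Complex_Main
begin

text \<open>Quaternions q = z + w j, stored as the pair (z, w) of complex numbers.\<close>
datatype quat = Quat (qz: complex) (qw: complex)

instantiation quat :: ab_group_add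
begin
definition "0 = Quat 0 0"
definition "p + q = Quat (qz p + qz q) (qw p + qw q)"
definition "- q = Quat (- qz q) (- qw q)"
definition "p - q = Quat (qz p - qz q) (qw p - qw q)"
instance
  by standard (auto simp: zero_quat_def plus_quat_def uminus_quat_def minus_quat_def
                 intro: quat.expand)
end

text \<open>Quaternion product, using j z = cnj z j and j j = -1:
  (z1 + w1 j)(z2 + w2 j) = (z1 z2 - w1 cnj w2) + (z1 w2 + w1 cnj z2) j.\<close>
definition qmult :: "quat \<Rightarrow> quat \<Rightarrow> quat" where
  "qmult p q = Quat (qz p * qz q - qw p * cnj (qw q)) (qz p * qw q + qw p * cnj (qz q))"

definition qcnj :: "quat \<Rightarrow> quat" where
  "qcnj q = Quat (cnj (qz q)) (- qw q)"

definition Co1 :: "quat \<Rightarrow> complex" where "Co1 q = qz q"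
definition Co2 :: "quat \<Rightarrow> complex" where "Co2 q = cnj (qw q)"

definition qnorm2 :: "quat \<Rightarrow> real" where
  "qnorm2 q = (cmod (Co1 q))\<^sup>2 + (cmod (Co2 q))\<^sup>2"

definition hinner :: "('d::finite \<Rightarrow> quat) \<Rightarrow> ('d \<Rightarrow> quat) \<Rightarrow> quat" where
  "hinner u v = (\<Sum>i\<in>UNIV. qmult (qcnj (v i)) (u i))"

definition hnorm2 :: "('d::finite \<Rightarrow> quat) \<Rightarrow> real" where
  "hnorm2 u = (\<Sum>i\<in>UNIV. qnorm2 (u i))"

definition cinner :: "('e::finite \<Rightarrow> complex) \<Rightarrow> ('e \<Rightarrow> complex) \<Rightarrow> complex" where
  "cinner u v = (\<Sum>i\<in>UNIV. cnj (v i) * u i)"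

definition cnorm2 :: "('e::finite \<Rightarrow> complex) \<Rightarrow> real" where
  "cnorm2 u = (\<Sum>i\<in>UNIV. (cmod (u i))\<^sup>2)"

definition htight :: "(nat \<Rightarrow> ('d::finite \<Rightarrow> quat)) \<Rightarrow> nat \<Rightarrow> bool" where
  "htight u n \<longleftrightarrow> (\<exists>A>0. \<forall>x. A * hnorm2 x = (\<Sum>j<n. qnorm2 (hinner x (u j))))"

definition ctight :: "(nat \<Rightarrow> ('e::finite \<Rightarrow> complex)) \<Rightarrow> nat \<Rightarrow> bool" where
  "ctight u n \<longleftrightarrow> (\<exists>A>0. \<forall>x. A * cnorm2 x = (\<Sum>j<n. (cmod (cinner x (u j)))\<^sup>2))"

definition toC :: "('d::finite \<Rightarrow> quat) \<Rightarrow> ('d + 'd \<Rightarrow> complex)" where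
  "toC v = (\<lambda>k. case k of Inl i \<Rightarrow> qz (v i) | Inr i \<Rightarrow> cnj (qw (v i)))"

end

theory Submission imports Defs begin

text \<open>Writing x j for the entrywise right product with j, one has
  Co1 \<langle>x, v\<rangle> = \<langle>[x], [v]\<rangle> and Co2 \<langle>x, v\<rangle> = - cnj \<langle>[x j], [v]\<rangle>, so every quaternionic
  frame sum splits into the complex frame sums of [x] and [x j], two vectors of the same norm.
  This gives (1) with twice the complex frame bound.  For (2), let B be the quaternionic bound,
  S the frame operator of ([v_j]) and T = \<Sum> |v_j|^2 = tr S; testing with unit vectors gives
  T = d B, and the two sums C1, C2 of (2) satisfy C1 + C2 = B T.  If ([v_j]) is tight with bound A, then
  C1 = C2 = A T.  Conversely C1 = C2 gives 2d C1 = T^2: the frame potential C1 = |S|_F^2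
  attains the Cauchy-Schwarz lower bound (tr S)^2 / 2d, which forces S to be scalar.\<close>

lemma sum_UNIV_Plus:
  "(\<Sum>a\<in>(UNIV::('a::finite + 'b::finite) set). g a) = (\<Sum>i\<in>UNIV. g (Inl i)) + (\<Sum>i\<in>UNIV. g (Inr i))"
  using sum.Plus[of "UNIV::'a set" "UNIV::'b set" g] by (simp add: o_def)

definition frame_op :: "(nat \<Rightarrow> ('e::finite \<Rightarrow> complex)) \<Rightarrow> nat \<Rightarrow> 'e \<Rightarrow> 'e \<Rightarrow> complex" where
  "frame_op u n a b = (\<Sum>j<n. u j a * cnj (u j b))"

lemma frame_sum_eq_quadratic_form:
  "complex_of_real (\<Sum>j<n. (cmod (cinner y (u j)))\<^sup>2)
     = (\<Sum>a\<in>UNIV. \<Sum>b\<in>UNIV. frame_op u n b a * y a * cnj (y b))"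
proof -
  have "complex_of_real (\<Sum>j<n. (cmod (cinner y (u j)))\<^sup>2)
      = (\<Sum>j<n. \<Sum>a\<in>UNIV. \<Sum>b\<in>UNIV. (cnj (u j a) * y a) * (u j b * cnj (y b)))"
    by (simp only: of_real_sum complex_norm_square) (simp add: cinner_def sum_product)
  also have "\<dots> = (\<Sum>a\<in>UNIV. \<Sum>b\<in>UNIV. \<Sum>j<n. (cnj (u j a) * y a) * (u j b * cnj (y b)))"
    by (simp add: sum.swap[where A="{..<n}" and B=UNIV])
  also have "\<dots> = (\<Sum>a\<in>UNIV. \<Sum>b\<in>UNIV. frame_op u n b a * y a * cnj (y b))"
    by (simp add: frame_op_def sum_distrib_left mult_ac)
  finally show ?thesis .
qed

lemma frame_potential_eq_frobenius:
  "(\<Sum>j<n. \<Sum>k<n. (cmod (cinner (u j) (u k)))\<^sup>2)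
     = (\<Sum>a\<in>UNIV. \<Sum>b\<in>UNIV. (cmod (frame_op u n a b))\<^sup>2)"
proof -
  have "complex_of_real (\<Sum>j<n. \<Sum>k<n. (cmod (cinner (u j) (u k)))\<^sup>2)
      = (\<Sum>j<n. \<Sum>k<n. \<Sum>a\<in>UNIV. \<Sum>b\<in>UNIV. (cnj (u k a) * u j a) * (u k b * cnj (u j b)))"
    by (simp only: of_real_sum complex_norm_square) (simp add: cinner_def sum_product)
  also have "\<dots> = (\<Sum>a\<in>UNIV. \<Sum>b\<in>UNIV. \<Sum>j<n. \<Sum>k<n. (cnj (u k a) * u j a) * (u k b * cnj (u j b)))"
    by (simp add: sum.swap[where A="{..<n}" and B=UNIV])
  also have "\<dots> = (\<Sum>a\<in>UNIV. \<Sum>b\<in>UNIV. frame_op u n a b * cnj (frame_op u n a b))"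
    by (simp add: frame_op_def sum_product mult_ac)
  also have "\<dots> = complex_of_real (\<Sum>a\<in>UNIV. \<Sum>b\<in>UNIV. (cmod (frame_op u n a b))\<^sup>2)"
    by (simp only: of_real_sum complex_norm_square)
  finally show ?thesis by (simp only: of_real_eq_iff)
qed

lemma trace_frame_op: "(\<Sum>a\<in>UNIV. frame_op u n a a) = complex_of_real (\<Sum>j<n. cnorm2 (u j))"
proof -
  have "(\<Sum>a\<in>UNIV. frame_op u n a a) = (\<Sum>j<n. \<Sum>a\<in>UNIV. u j a * cnj (u j a))"
    unfolding frame_op_def by (rule sum.swap)
  then show ?thesis by (simp only: cnorm2_def of_real_sum complex_norm_square)
qed

lemma ctight_if_frame_op_scalar:
  assumes "c > 0" and S: "\<And>a b. frame_op u n a b = (if a = b then complex_of_real c else 0)"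
  shows "ctight u n"
proof -
  have "c * cnorm2 y = (\<Sum>j<n. (cmod (cinner y (u j)))\<^sup>2)" for y
  proof -
    have "frame_op u n b a * y a * cnj (y b) = (if b = a then complex_of_real c * (y a * cnj (y a)) else 0)"
      for a b by (simp add: S)
    then have "complex_of_real (\<Sum>j<n. (cmod (cinner y (u j)))\<^sup>2)
        = (\<Sum>a\<in>UNIV. complex_of_real c * (y a * cnj (y a)))"
      unfolding frame_sum_eq_quadratic_form by simp
    also have "\<dots> = complex_of_real (c * cnorm2 y)"
      by (simp only: cnorm2_def of_real_mult of_real_sum complex_norm_square sum_distrib_left)
    finally show ?thesis by (simp only: of_real_eq_iff)
  qed
  with \<open>c > 0\<close> show ?thesis unfolding ctight_def by blast
qed

text \<open>With c = tr S / D one has |S - c I|_F^2 = |S|_F^2 - (tr S)^2 / D, which vanishes.\<close>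
lemma frame_op_scalar_if_potential_minimal:
  fixes u :: "nat \<Rightarrow> ('e::finite \<Rightarrow> complex)" and n :: nat
  defines "T \<equiv> \<Sum>j<n. cnorm2 (u j)"
  assumes "real (card (UNIV :: 'e set)) * (\<Sum>j<n. \<Sum>k<n. (cmod (cinner (u j) (u k)))\<^sup>2) = T\<^sup>2"
  shows "frame_op u n a b = (if a = b then complex_of_real (T / card (UNIV :: 'e set)) else 0)"
proof -
  define c where "c = T / card (UNIV :: 'e set)"
  define D where "D a b = frame_op u n a b - (if a = b then complex_of_real c else 0)" for a b
  have trace_Re: "(\<Sum>a\<in>UNIV. Re (frame_op u n a a)) = T"
    using arg_cong[OF trace_frame_op, of Re] by (simp add: T_def)
  have "(cmod (D a b))\<^sup>2
      = (cmod (frame_op u n a b))\<^sup>2 - (if a = b then 2 * c * Re (frame_op u n a a) - c\<^sup>2 else 0)" for a b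
    by (simp add: D_def cmod_power2 power2_diff)
  then have "(\<Sum>a\<in>UNIV. \<Sum>b\<in>UNIV. (cmod (D a b))\<^sup>2)
      = (\<Sum>j<n. \<Sum>k<n. (cmod (cinner (u j) (u k)))\<^sup>2) - (2 * c * T - card (UNIV :: 'e set) * c\<^sup>2)"
    by (simp add: frame_potential_eq_frobenius sum_subtractf sum.delta' sum_distrib_left[symmetric] trace_Re)
  also have "\<dots> = 0"
    using assms(2) by (simp add: c_def field_simps power2_eq_square)
  finally have "(\<Sum>a\<in>UNIV. \<Sum>b\<in>UNIV. (cmod (D a b))\<^sup>2) = 0" .
  then have "(cmod (D a b))\<^sup>2 = 0"
    by (simp add: sum_nonneg_eq_0_iff sum_nonneg)
  then show ?thesis by (simp add: D_def c_def)
qed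

lemma ctight_if_potential_minimal:
  fixes u :: "nat \<Rightarrow> ('e::finite \<Rightarrow> complex)"
  assumes "(\<Sum>j<n. cnorm2 (u j)) > 0"
    and "real (card (UNIV :: 'e set)) * (\<Sum>j<n. \<Sum>k<n. (cmod (cinner (u j) (u k)))\<^sup>2) = (\<Sum>j<n. cnorm2 (u j))\<^sup>2"
  shows "ctight u n"
proof (rule ctight_if_frame_op_scalar[OF _ frame_op_scalar_if_potential_minimal[OF assms(2)]])
  have "card (UNIV :: 'e set) > 0"
    by (simp add: finite_UNIV_card_ge_0)
  with assms(1) show "0 < (\<Sum>j<n. cnorm2 (u j)) / card (UNIV :: 'e set)"
    by simp
qed


lemma qz_sum: "finite A \<Longrightarrow> qz (sum f A) = (\<Sum>x\<in>A. qz (f x))"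
  by (induction A rule: finite_induct) (auto simp: zero_quat_def plus_quat_def)

lemma qw_sum: "finite A \<Longrightarrow> qw (sum f A) = (\<Sum>x\<in>A. qw (f x))"
  by (induction A rule: finite_induct) (auto simp: zero_quat_def plus_quat_def)

definition hmult_j :: "('d::finite \<Rightarrow> quat) \<Rightarrow> ('d \<Rightarrow> quat)" where
  "hmult_j x = (\<lambda>i. qmult (x i) (Quat 0 1))"

lemma hmult_j_apply: "hmult_j x i = Quat (- qw (x i)) (qz (x i))"
  by (simp add: hmult_j_def qmult_def)

lemma Co1_hinner: "Co1 (hinner x v) = cinner (toC x) (toC v)"
  by (simp add: Co1_def hinner_def cinner_def qz_sum sum_UNIV_Plus toC_def qmult_def qcnj_def
      sum.distrib[symmetric] mult.commute)

lemma cinner_toC_hmult_j: "cinner (toC (hmult_j x)) (toC v) = - cnj (Co2 (hinner x v))"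
  by (simp add: Co2_def hinner_def cinner_def qw_sum sum_UNIV_Plus toC_def qmult_def qcnj_def
      hmult_j_apply sum.distrib[symmetric] sum_negf[symmetric] algebra_simps)

lemma cmod_Co2_hinner: "cmod (Co2 (hinner x v)) = cmod (cinner (toC (hmult_j x)) (toC v))"
  by (simp add: cinner_toC_hmult_j)

lemma qnorm2_hinner:
  "qnorm2 (hinner x v) = (cmod (cinner (toC x) (toC v)))\<^sup>2 + (cmod (cinner (toC (hmult_j x)) (toC v)))\<^sup>2"
  by (simp add: qnorm2_def Co1_hinner cmod_Co2_hinner)

lemma cnorm2_toC: "cnorm2 (toC x) = hnorm2 x"
  by (simp add: cnorm2_def hnorm2_def qnorm2_def sum_UNIV_Plus toC_def Co1_def Co2_def sum.distrib)

lemma cnorm2_toC_hmult_j: "cnorm2 (toC (hmult_j x)) = hnorm2 x"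
  by (simp add: cnorm2_def hnorm2_def qnorm2_def sum_UNIV_Plus toC_def Co1_def Co2_def sum.distrib
      hmult_j_apply add.commute)

lemma hnorm2_hmult_j: "hnorm2 (hmult_j x) = hnorm2 x"
  using cnorm2_toC_hmult_j[of x] cnorm2_toC[of "hmult_j x"] by simp

lemma frame_sum_toC:
  "(\<Sum>j<n. qnorm2 (hinner x (v j)))
     = (\<Sum>j<n. (cmod (cinner (toC x) (toC (v j))))\<^sup>2) + (\<Sum>j<n. (cmod (cinner (toC (hmult_j x)) (toC (v j))))\<^sup>2)"
  by (simp add: qnorm2_hinner sum.distrib)


lemma hinner_unit: "hinner (\<lambda>k. if k = i then Quat 1 0 else 0) v = qcnj (v i)"
proof -
  have "qmult (qcnj (v k)) (if k = i then Quat 1 0 else 0) = (if k = i then qcnj (v i) else 0)" for k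
    by (simp add: qmult_def qcnj_def zero_quat_def)
  then show ?thesis by (simp add: hinner_def)
qed

lemma hnorm2_unit: "hnorm2 (\<lambda>k. if k = (i::'d::finite) then Quat 1 0 else 0) = 1"
  by (simp add: hnorm2_def qnorm2_def Co1_def Co2_def if_distrib zero_quat_def cong: if_cong)

lemma sum_hnorm2_tight_frame:
  fixes v :: "nat \<Rightarrow> ('d::finite \<Rightarrow> quat)" and B :: real
  assumes "\<And>x. B * hnorm2 x = (\<Sum>j<n. qnorm2 (hinner x (v j)))"
  shows "(\<Sum>j<n. hnorm2 (v j)) = card (UNIV :: 'd set) * B"
proof -
  have "B = (\<Sum>j<n. qnorm2 (v j i))" for i
    using assms[of "\<lambda>k. if k = i then Quat 1 0 else 0"]
    by (simp add: hinner_unit hnorm2_unit qnorm2_def Co1_def Co2_def qcnj_def)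
  then show ?thesis
    by (simp add: hnorm2_def sum.swap[where A="{..<n}"])
qed


lemma htight_if_ctight_toC:
  fixes v :: "nat \<Rightarrow> ('d::finite \<Rightarrow> quat)"
  assumes "ctight (\<lambda>j. toC (v j)) n"
  shows "htight v n"
proof -
  obtain A where "A > 0"
    and A: "\<And>y. A * cnorm2 y = (\<Sum>j<n. (cmod (cinner y (toC (v j))))\<^sup>2)"
    using assms unfolding ctight_def by blast
  have "(2 * A) * hnorm2 x = (\<Sum>j<n. qnorm2 (hinner x (v j)))" for x
    using A[of "toC x"] A[of "toC (hmult_j x)"]
    by (simp add: frame_sum_toC cnorm2_toC hnorm2_hmult_j)
  with \<open>A > 0\<close> show ?thesis
    unfolding htight_def by (intro exI[of _ "2 * A"]) auto
qed

lemma ctight_toC_iff_potentials_eq: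
  fixes v :: "nat \<Rightarrow> ('d::finite \<Rightarrow> quat)"
  assumes "htight v n"
  shows "ctight (\<lambda>j. toC (v j)) n \<longleftrightarrow>
           (\<Sum>j<n. \<Sum>k<n. (cmod (Co1 (hinner (v j) (v k))))\<^sup>2)
           = (\<Sum>j<n. \<Sum>k<n. (cmod (Co2 (hinner (v j) (v k))))\<^sup>2)"
    (is "ctight ?u n \<longleftrightarrow> ?C1 = ?C2")
proof -
  obtain B where "B > 0" and B: "\<And>x. B * hnorm2 x = (\<Sum>j<n. qnorm2 (hinner x (v j)))"
    using assms unfolding htight_def by blast
  define T where "T = (\<Sum>j<n. hnorm2 (v j))"
  have T_toC: "T = (\<Sum>j<n. cnorm2 (?u j))"
    by (simp add: T_def cnorm2_toC)
  have C1: "?C1 = (\<Sum>j<n. \<Sum>k<n. (cmod (cinner (?u j) (?u k)))\<^sup>2)"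
    by (simp add: Co1_hinner)
  have C2: "?C2 = (\<Sum>j<n. \<Sum>k<n. (cmod (cinner (toC (hmult_j (v j))) (?u k)))\<^sup>2)"
    by (simp add: cmod_Co2_hinner)
  have "?C1 + ?C2 = (\<Sum>j<n. \<Sum>k<n. qnorm2 (hinner (v j) (v k)))"
    by (simp add: qnorm2_def sum.distrib)
  also have "\<dots> = B * T"
    by (simp add: T_def sum_distrib_left B)
  finally have sum_C: "?C1 + ?C2 = B * T" .
  have T_trace: "T = card (UNIV :: 'd set) * B"
    unfolding T_def using B by (rule sum_hnorm2_tight_frame)
  show ?thesis
  proof
    assume "ctight ?u n"
    then obtain A where A: "\<And>y. A * cnorm2 y = (\<Sum>j<n. (cmod (cinner y (?u j)))\<^sup>2)"
      unfolding ctight_def by blast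
    have "?C1 = A * T"
      unfolding C1 T_toC sum_distrib_left A ..
    moreover have "?C2 = A * T"
      unfolding C2 T_def sum_distrib_left A[symmetric] by (simp add: cnorm2_toC_hmult_j)
    ultimately show "?C1 = ?C2" by simp
  next
    assume "?C1 = ?C2"
    have "card (UNIV :: 'd set) > 0"
      by (simp add: finite_UNIV_card_ge_0)
    then have "T > 0"
      using \<open>B > 0\<close> by (simp add: T_trace)
    have "card (UNIV :: ('d + 'd) set) = 2 * card (UNIV :: 'd set)"
      using card_Plus[of "UNIV :: 'd set" "UNIV :: 'd set"] by simp
    then have "real (card (UNIV :: ('d + 'd) set)) * ?C1 = card (UNIV :: 'd set) * (?C1 + ?C2)"
      using \<open>?C1 = ?C2\<close> by simp
    also have "\<dots> = T\<^sup>2"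
      unfolding sum_C by (simp add: T_trace power2_eq_square)
    finally have "real (card (UNIV :: ('d + 'd) set)) * ?C1 = T\<^sup>2" .
    with \<open>T > 0\<close> show "ctight ?u n"
      by (intro ctight_if_potential_minimal) (simp_all only: T_toC C1)
  qed
qed

theorem theorem10:
  fixes v :: "nat \<Rightarrow> ('d::finite \<Rightarrow> quat)" and n :: nat
  shows "(ctight (\<lambda>j. toC (v j)) n \<longrightarrow> htight v n)
       \<and> (htight v n \<longrightarrow>
            (ctight (\<lambda>j. toC (v j)) n \<longleftrightarrow>
              (\<Sum>j<n. \<Sum>k<n. (cmod (Co1 (hinner (v j) (v k))))\<^sup>2)
              = (\<Sum>j<n. \<Sum>k<n. (cmod (Co2 (hinner (v j) (v k))))\<^sup>2)))"
  using htight_if_ctight_toC ctight_toC_iff_potentials_eq by blast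

end
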